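(* For any simple undirected graph $G$ with $m$ edges, $$\Phi_1=\sum_{\{st,uv\}\in Q}(k_sk_t+k_uk_v)=(m+1)\psi-\sum_{st\in E}k_sk_t(k_s+k_t).$$
   Context: $k_x$ is the degree of $x$, $\psi=\sum_{st\in E}k_sk_t$. $Q$ is the set of unordered pairs $\{st,uv\}$ of edges with $s,t,u,v$ pairwise distinct. *)

theory Defs
  imports Main
begin

text \<open>A finite simple undirected graph given by its edge set: each edge is a
2-element set of vertices (no loops, no multi-edges).\<close>
definition simple_graph :: "'a set set \<Rightarrow> bool" where
  "simple_graph E \<longleftrightarrow> finite E \<and> (\<forall>e\<in>E. card e = 2)"

definition deg :: "'a set set \<Rightarrow> 'a \<Rightarrow> int" where
  "deg E x = int (card {e\<in>E. x \<in> e})"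

definition psi :: "'a set set \<Rightarrow> int" where
  "psi E = (\<Sum>e\<in>E. \<Prod>x\<in>e. deg E x)"

definition Qpairs :: "'a set set \<Rightarrow> 'a set set set" where
  "Qpairs E = {{{s,t},{u,v}} | s t u v.
      {s,t} \<in> E \<and> {u,v} \<in> E \<and> distinct [s,t,u,v]}"

definition Phi1 :: "'a set set \<Rightarrow> int" where
  "Phi1 E = (\<Sum>q\<in>Qpairs E. \<Sum>e\<in>q. \<Prod>x\<in>e. deg E x)"

end

theory Submission
  imports Defs
begin

text \<open>Each unordered pair in Q is counted by both of its ordered versions, so
\<open>\<Phi>\<^sub>1\<close> is the sum of \<open>k\<^sub>sk\<^sub>t\<close> over edges \<open>st\<close>, weighted by the number
of edges disjoint from \<open>st\<close>. By inclusion-exclusion that number is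
\<open>m - (k\<^sub>s + k\<^sub>t - 1)\<close>, since \<open>st\<close> is the only edge through both \<open>s\<close> and \<open>t\<close>.\<close>

lemma sum_over_unordered_pairs:
  fixes f :: "'a \<Rightarrow> 'b::comm_semiring_1"
  assumes "finite A"
    and sym: "\<And>a b. a \<in> A \<Longrightarrow> b \<in> A \<Longrightarrow> R a b \<Longrightarrow> R b a"
    and irrefl: "\<And>a. a \<in> A \<Longrightarrow> \<not> R a a"
  shows "(\<Sum>q\<in>{{a, b} | a b. a \<in> A \<and> b \<in> A \<and> R a b}. \<Sum>x\<in>q. f x)
       = (\<Sum>a\<in>A. f a * of_nat (card {b\<in>A. R a b}))"
proof -
  define P where "P = {(a, b). a \<in> A \<and> b \<in> A \<and> R a b}"
  have finite_P: "finite P"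
    unfolding P_def using \<open>finite A\<close> by (auto intro: finite_subset[of _ "A \<times> A"])
  have pairs_image: "{{a, b} | a b. a \<in> A \<and> b \<in> A \<and> R a b} = (\<lambda>(a, b). {a, b}) ` P"
    unfolding P_def by auto
  have fibre: "(\<Sum>p\<in>{p\<in>P. (\<lambda>(a, b). {a, b}) p = q}. f (fst p)) = (\<Sum>x\<in>q. f x)"
    if q_image: "q \<in> (\<lambda>(a, b). {a, b}) ` P" for q
  proof -
    obtain a b where q: "q = {a, b}" and ab: "(a, b) \<in> P"
      using q_image by force
    have "a \<noteq> b" using ab irrefl unfolding P_def by auto
    moreover have "{p\<in>P. (\<lambda>(a, b). {a, b}) p = q} = {(a, b), (b, a)}"
    proof (intro set_eqI iffI)
      fix p assume "p \<in> {p\<in>P. (\<lambda>(a, b). {a, b}) p = q}"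
      then obtain x y where "p = (x, y)" "{x, y} = {a, b}"
        unfolding q by (cases p) auto
      then show "p \<in> {(a, b), (b, a)}" by (simp add: doubleton_eq_iff)
    next
      fix p assume "p \<in> {(a, b), (b, a)}"
      moreover have "(b, a) \<in> P" using ab sym unfolding P_def by simp
      ultimately show "p \<in> {p\<in>P. (\<lambda>(a, b). {a, b}) p = q}"
        using ab unfolding q by (auto simp: insert_commute)
    qed
    ultimately show ?thesis using q by simp
  qed
  have "(\<Sum>q\<in>(\<lambda>(a, b). {a, b}) ` P. \<Sum>x\<in>q. f x) = (\<Sum>p\<in>P. f (fst p))"
    using sum.image_gen[OF finite_P, of "\<lambda>p. f (fst p)" "\<lambda>(a, b). {a, b}"] fibre
    by simp
  also have "\<dots> = (\<Sum>a\<in>A. \<Sum>b\<in>{b\<in>A. R a b}. f a)"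
    unfolding P_def using \<open>finite A\<close>
    by (subst sum.Sigma) (auto intro!: sum.cong simp: Sigma_def)
  finally show ?thesis
    unfolding pairs_image by (simp add: mult.commute)
qed

lemma simple_graph_finite: "simple_graph E \<Longrightarrow> finite E"
  unfolding simple_graph_def by simp

lemma simple_graph_edgeE:
  assumes "simple_graph E" and "e \<in> E"
  obtains s t where "s \<noteq> t" and "e = {s, t}"
  using assms unfolding simple_graph_def by (meson card_2_iff)

lemma Qpairs_eq_disjoint_edge_pairs:
  assumes "simple_graph E"
  shows "Qpairs E = {{e, f} | e f. e \<in> E \<and> f \<in> E \<and> e \<inter> f = {}}"
proof (intro set_eqI iffI)
  fix q assume "q \<in> Qpairs E"
  then obtain s t u v where q: "q = {{s, t}, {u, v}}" "{s, t} \<in> E" "{u, v} \<in> E"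
    and "distinct [s, t, u, v]"
    unfolding Qpairs_def by blast
  then have "{s, t} \<inter> {u, v} = {}" by auto
  with q show "q \<in> {{e, f} | e f. e \<in> E \<and> f \<in> E \<and> e \<inter> f = {}}"
    by blast
next
  fix q assume "q \<in> {{e, f} | e f. e \<in> E \<and> f \<in> E \<and> e \<inter> f = {}}"
  then obtain e f where q: "q = {e, f}" "e \<in> E" "f \<in> E" "e \<inter> f = {}" by blast
  obtain s t where st: "s \<noteq> t" "e = {s, t}"
    using simple_graph_edgeE[OF assms q(2)] .
  obtain u v where uv: "u \<noteq> v" "f = {u, v}"
    using simple_graph_edgeE[OF assms q(3)] .
  have "distinct [s, t, u, v]"
    using st uv q(4) by auto
  with q st uv show "q \<in> Qpairs E"
    unfolding Qpairs_def by blast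
qed

lemma simple_graph_edges_through_both_ends:
  assumes "simple_graph E" and "{s, t} \<in> E" and "s \<noteq> t"
  shows "{f\<in>E. s \<in> f} \<inter> {f\<in>E. t \<in> f} = {{s, t}}"
proof (intro set_eqI iffI)
  fix f assume "f \<in> {f\<in>E. s \<in> f} \<inter> {f\<in>E. t \<in> f}"
  then have "f \<in> E" and st_subset: "{s, t} \<subseteq> f" by auto
  then have card_f: "card f = 2"
    using assms(1) unfolding simple_graph_def by blast
  then have "finite f"
    using card.infinite by fastforce
  moreover have "card {s, t} = card f"
    using card_f assms(3) by simp
  ultimately have "{s, t} = f"
    using card_subset_eq st_subset by blast
  then show "f \<in> {{s, t}}" by simp
qed (use assms(2) in auto)

lemma card_edges_disjoint_from_edge:
  assumes "simple_graph E" and "e \<in> E"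
  shows "int (card {f\<in>E. e \<inter> f = {}}) = int (card E) + 1 - (\<Sum>x\<in>e. deg E x)"
proof -
  define D where "D = {f\<in>E. e \<inter> f = {}}"
  define S where "S x = {f\<in>E. x \<in> f}" for x
  obtain s t where st: "s \<noteq> t" "e = {s, t}"
    using simple_graph_edgeE[OF assms] .
  have finite_E: "finite E" using simple_graph_finite[OF assms(1)] .
  have "E - D = S s \<union> S t"
    unfolding D_def S_def st(2) by blast
  moreover have "S s \<inter> S t = {e}"
    unfolding S_def st(2)
    using simple_graph_edges_through_both_ends[OF assms(1) _ st(1)] assms(2) st(2) by simp
  moreover have "finite (S s)" "finite (S t)"
    unfolding S_def using finite_E by simp_all
  ultimately have "card (E - D) + 1 = card (S s) + card (S t)"
    using card_Un_Int[of "S s" "S t"] by simp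
  moreover have "card (E - D) + card D = card E"
    using finite_E card_Diff_subset[of D E] card_mono[of E D] unfolding D_def by auto
  moreover have "(\<Sum>x\<in>e. deg E x) = int (card (S s)) + int (card (S t))"
    using st unfolding deg_def S_def by simp
  ultimately show ?thesis
    unfolding D_def by linarith
qed

theorem proposition7:
  fixes E :: "'a set set" and m :: nat
  assumes "simple_graph E" and "card E = m"
  shows "Phi1 E = (int m + 1) * psi E
           - (\<Sum>e\<in>E. (\<Prod>x\<in>e. deg E x) * (\<Sum>x\<in>e. deg E x))"
proof -
  have edges_nonempty: "\<And>e. e \<in> E \<Longrightarrow> e \<inter> e \<noteq> {}"
    using simple_graph_edgeE[OF assms(1)] by blast
  have "Phi1 E = (\<Sum>e\<in>E. (\<Prod>x\<in>e. deg E x) * int (card {f\<in>E. e \<inter> f = {}}))"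
    unfolding Phi1_def Qpairs_eq_disjoint_edge_pairs[OF assms(1)]
    by (rule sum_over_unordered_pairs[OF simple_graph_finite[OF assms(1)]])
      (use edges_nonempty in auto)
  also have "\<dots> = (\<Sum>e\<in>E. (\<Prod>x\<in>e. deg E x) * (int m + 1 - (\<Sum>x\<in>e. deg E x)))"
    using card_edges_disjoint_from_edge[OF assms(1)] assms(2) by simp
  also have "\<dots> = (int m + 1) * psi E - (\<Sum>e\<in>E. (\<Prod>x\<in>e. deg E x) * (\<Sum>x\<in>e. deg E x))"
    unfolding psi_def by (simp add: algebra_simps sum_distrib_left sum_subtractf)
  finally show ?thesis .
qed

end
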